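(* For every integer $n\ge 1$, the hexagonal stacked prism $Y_{6,n}$ is odd prime.
   Context: All graphs are finite and simple. A graph $G$ of order $N$ is odd prime if there is a bijection $\ell:V(G)\to\{1,3,\ldots,2N-1\}$ with $\gcd(\ell(u),\ell(v))=1$ for every edge $uv$. For $k\ge 3$, $n\ge 1$, the stacked prism $Y_{k,n}$ is the Cartesian product $C_k\,\square\,P_n$ of a $k$-cycle and a path on $n$ vertices: vertices $v_{i,j}$ ($1\le i\le n$, $1\le j\le k$), with edges $v_{i,j}v_{i,j+1}$ ($1\le j\le k-1$), $v_{i,k}v_{i,1}$ for each $i$, and $v_{i,j}v_{i+1,j}$ for $1\le i\le n-1$, $1\le j\le k$. *)

theory Defs
  imports Main
begin

definition odd_prime_graph :: "'a set \<Rightarrow> ('a \<Rightarrow> 'a \<Rightarrow> bool) \<Rightarrow> bool" where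
  "odd_prime_graph V E \<longleftrightarrow>
     (\<exists>l :: 'a \<Rightarrow> nat. bij_betw l V {m. odd m \<and> m \<le> 2 * card V - 1} \<and>
        (\<forall>u\<in>V. \<forall>v\<in>V. E u v \<longrightarrow> gcd (l u) (l v) = 1))"

text \<open>Stacked prism Y_{k,n} = C_k \<box> P_n: vertex (i,j) stands for v_{i,j},
  1 \<le> i \<le> n, 1 \<le> j \<le> k.\<close>

definition prism_vertices :: "nat \<Rightarrow> nat \<Rightarrow> (nat \<times> nat) set" where
  "prism_vertices k n = {1..n} \<times> {1..k}"

definition prism_edge_dir :: "nat \<Rightarrow> nat \<Rightarrow> nat \<times> nat \<Rightarrow> nat \<times> nat \<Rightarrow> bool" where
  "prism_edge_dir k n a b \<longleftrightarrow>
     (case (a, b) of ((i, j), (i', j')) \<Rightarrow>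
        1 \<le> i \<and> i \<le> n \<and> 1 \<le> j \<and> j \<le> k \<and>
        ((i' = i \<and> 1 \<le> j \<and> j \<le> k - 1 \<and> j' = j + 1) \<or>
         (i' = i \<and> j = k \<and> j' = 1) \<or>
         (1 \<le> i \<and> i \<le> n - 1 \<and> i' = i + 1 \<and> j' = j)))"

definition prism_adj :: "nat \<Rightarrow> nat \<Rightarrow> nat \<times> nat \<Rightarrow> nat \<times> nat \<Rightarrow> bool" where
  "prism_adj k n a b \<longleftrightarrow> prism_edge_dir k n a b \<or> prism_edge_dir k n b a"

end

theory Submission
  imports Defs
begin

text \<open>Layer i of the prism receives the odd numbers between 12(i - 1) and 12 i, placed around
  the hexagon according to one of three patterns used cyclically. The patterns are chosen so that
  the labels of adjacent vertices, in the same layer or in consecutive layers, always differ by a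
  power of two; and two odd numbers differing by a power of two are coprime, since a common divisor
  is odd and divides the power of two.\<close>

definition pow2_apart :: "nat \<Rightarrow> nat \<Rightarrow> bool" where
  "pow2_apart a b \<longleftrightarrow> (\<exists>e. b = a + 2 ^ e \<or> a = b + 2 ^ e)"

lemma pow2_apart_add_left_iff: "pow2_apart (c + a) (c + b) \<longleftrightarrow> pow2_apart a b"
  by (auto simp: pow2_apart_def)

lemma coprime_add_pow2:
  fixes a :: nat
  assumes "odd a"
  shows "coprime a (a + 2 ^ e)"
proof -
  have "coprime a (2 ^ e)"
    using assms by (simp add: coprime_commute)
  then show ?thesis
    by (simp add: coprime_iff_gcd_eq_1 add.commute)
qed

lemma coprime_if_pow2_apart:
  assumes "odd a" "odd b" "pow2_apart a b"
  shows "coprime a b"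
  using assms coprime_add_pow2[of a] coprime_add_pow2[of b]
  by (auto simp: pow2_apart_def coprime_commute)

definition layer_label :: "nat \<Rightarrow> (nat \<Rightarrow> nat \<Rightarrow> nat) \<Rightarrow> nat \<times> nat \<Rightarrow> nat" where
  "layer_label k P = (\<lambda>(i, j). 2 * k * (i - 1) + P i j)"

lemma odds_le_double_minus_1:
  "{m. odd m \<and> m \<le> 2 * N - 1} = {m :: nat. odd m \<and> m < 2 * N}"
  by auto presburger

lemma bij_betw_layer_label:
  assumes rows: "\<And>i. i \<in> {1..n} \<Longrightarrow> bij_betw (P i) {1..k} {x. odd x \<and> x < 2 * k}"
  shows "bij_betw (layer_label k P) (prism_vertices k n) {y. odd y \<and> y < 2 * k * n}"
  unfolding bij_betw_def
proof (intro conjI)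
  have below: "P i j < 2 * k" if "i \<in> {1..n}" "j \<in> {1..k}" for i j
    using bij_betwE[OF rows[OF that(1)]] that(2) by blast
  have block: "(2 * k * q + x) div (2 * k) = q" "(2 * k * q + x) mod (2 * k) = x"
    if "x < 2 * k" for q x
    using that by simp_all
  show "inj_on (layer_label k P) (prism_vertices k n)"
  proof (rule inj_onI, clarify)
    fix i j i' j'
    assume ij: "(i, j) \<in> prism_vertices k n" and ij': "(i', j') \<in> prism_vertices k n"
      and eq: "layer_label k P (i, j) = layer_label k P (i', j')"
    have "i - 1 = i' - 1" and labels: "P i j = P i' j'"
      using eq block[OF below[of i j], of "i - 1"] block[OF below[of i' j'], of "i' - 1"] ij ij'
      by (auto simp: layer_label_def prism_vertices_def)
    then have "i = i'"
      using ij ij' by (auto simp: prism_vertices_def)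
    moreover have "inj_on (P i) {1..k}"
      using rows[of i] ij by (simp add: prism_vertices_def bij_betw_def)
    ultimately show "i = i' \<and> j = j'"
      using labels ij ij' by (auto simp: prism_vertices_def dest: inj_onD)
  qed
  show "layer_label k P ` prism_vertices k n = {y. odd y \<and> y < 2 * k * n}"
  proof (intro equalityI subsetI)
    fix y assume "y \<in> layer_label k P ` prism_vertices k n"
    then obtain i j where ij: "i \<in> {1..n}" "j \<in> {1..k}" and y: "y = 2 * k * (i - 1) + P i j"
      by (auto simp: prism_vertices_def layer_label_def)
    have "odd (P i j)"
      using bij_betwE[OF rows[OF ij(1)]] ij(2) by blast
    moreover have "2 * k * (i - 1) + 2 * k \<le> 2 * k * n"
      using ij(1) mult_le_mono2[of i n "2 * k"] by (cases i) (simp_all add: algebra_simps)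
    ultimately show "y \<in> {y. odd y \<and> y < 2 * k * n}"
      using y below[OF ij] by auto
  next
    fix y assume "y \<in> {y. odd y \<and> y < 2 * k * n}"
    then have y: "odd y" "y < 2 * k * n" by auto
    define q where "q = y div (2 * k)"
    define x where "x = y mod (2 * k)"
    have "0 < k"
      using y(2) by (cases k) auto
    have row: "q + 1 \<in> {1..n}"
      using less_mult_imp_div_less[of y n "2 * k"] y(2) by (simp add: q_def ac_simps)
    have "x \<in> {x. odd x \<and> x < 2 * k}"
      using y \<open>0 < k\<close> by (simp add: x_def dvd_mod_iff)
    then obtain j where j: "j \<in> {1..k}" "P (q + 1) j = x"
      using bij_betw_imp_surj_on[OF rows[OF row]] by (metis imageE)
    have "y = layer_label k P (q + 1, j)"
      using j by (simp add: layer_label_def q_def x_def)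
    with row j(1) show "y \<in> layer_label k P ` prism_vertices k n"
      by (auto simp: prism_vertices_def)
  qed
qed

lemma prism_edge_dir_cases:
  assumes "prism_edge_dir k n a b"
  obtains (around) i j where "a = (i, j)" "b = (i, Suc j)" "i \<in> {1..n}" "j \<in> {1..<k}"
    | (wrap) i where "a = (i, k)" "b = (i, 1)" "i \<in> {1..n}" "1 \<le> k"
    | (up) i j where "a = (i, j)" "b = (Suc i, j)" "i \<in> {1..<n}" "j \<in> {1..k}"
  using assms by (cases a; cases b) (auto simp: prism_edge_dir_def)

lemma odd_layer_label:
  assumes "\<And>i j. i \<in> {1..n} \<Longrightarrow> j \<in> {1..k} \<Longrightarrow> odd (P i j)"
    and "a \<in> prism_vertices k n"
  shows "odd (layer_label k P a)"
  using assms by (auto simp: layer_label_def prism_vertices_def)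

lemma coprime_layer_label_edge:
  assumes odd_rows: "\<And>i j. i \<in> {1..n} \<Longrightarrow> j \<in> {1..k} \<Longrightarrow> odd (P i j)"
    and horizontal: "\<And>i j. i \<in> {1..n} \<Longrightarrow> j \<in> {1..<k} \<Longrightarrow> pow2_apart (P i j) (P i (Suc j))"
    and closing: "\<And>i. i \<in> {1..n} \<Longrightarrow> pow2_apart (P i k) (P i 1)"
    and vertical: "\<And>i j. i \<in> {1..<n} \<Longrightarrow> j \<in> {1..k} \<Longrightarrow> pow2_apart (P i j) (2 * k + P (Suc i) j)"
    and edge: "prism_edge_dir k n a b"
  shows "coprime (layer_label k P a) (layer_label k P b)"
proof (rule coprime_if_pow2_apart)
  from edge have "a \<in> prism_vertices k n \<and> b \<in> prism_vertices k n"
    by (cases rule: prism_edge_dir_cases) (auto simp: prism_vertices_def)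
  then show "odd (layer_label k P a)" "odd (layer_label k P b)"
    using odd_layer_label[where P = P, OF odd_rows] by blast+
  from edge show "pow2_apart (layer_label k P a) (layer_label k P b)"
  proof (cases rule: prism_edge_dir_cases)
    case (around i j)
    then show ?thesis
      using horizontal by (simp add: layer_label_def pow2_apart_add_left_iff)
  next
    case (wrap i)
    then show ?thesis
      using closing by (simp add: layer_label_def pow2_apart_add_left_iff)
  next
    case (up i j)
    have "pow2_apart (2 * k * (i - 1) + P i j) (2 * k * (i - 1) + (2 * k + P (Suc i) j))"
      using vertical[OF up(3,4)] by (simp only: pow2_apart_add_left_iff)
    moreover have "2 * k * (Suc i - 1) = 2 * k * (i - 1) + 2 * k"
      using up(3) by (cases i) auto
    ultimately show ?thesis
      using up(1,2) by (simp add: layer_label_def add.assoc)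
  qed
qed

lemma odd_prime_prism_if_layers_pow2_apart:
  assumes rows: "\<And>i. i \<in> {1..n} \<Longrightarrow> bij_betw (P i) {1..k} {x. odd x \<and> x < 2 * k}"
    and horizontal: "\<And>i j. i \<in> {1..n} \<Longrightarrow> j \<in> {1..<k} \<Longrightarrow> pow2_apart (P i j) (P i (Suc j))"
    and closing: "\<And>i. i \<in> {1..n} \<Longrightarrow> pow2_apart (P i k) (P i 1)"
    and vertical: "\<And>i j. i \<in> {1..<n} \<Longrightarrow> j \<in> {1..k} \<Longrightarrow> pow2_apart (P i j) (2 * k + P (Suc i) j)"
  shows "odd_prime_graph (prism_vertices k n) (prism_adj k n)"
proof -
  have card: "card (prism_vertices k n) = k * n"
    by (simp add: prism_vertices_def card_cartesian_product)
  have odd_rows: "odd (P i j)" if "i \<in> {1..n}" "j \<in> {1..k}" for i j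
    using bij_betwE[OF rows[OF that(1)]] that(2) by blast
  show ?thesis
    unfolding odd_prime_graph_def card odds_le_double_minus_1
  proof (intro exI conjI ballI impI)
    show "bij_betw (layer_label k P) (prism_vertices k n) {m. odd m \<and> m < 2 * (k * n)}"
      using bij_betw_layer_label[OF rows] by (simp add: mult.assoc)
    fix u v assume "prism_adj k n u v"
    then show "gcd (layer_label k P u) (layer_label k P v) = 1"
      using coprime_layer_label_edge[of n k P, OF odd_rows horizontal closing vertical]
      unfolding prism_adj_def by (metis coprime_iff_gcd_eq_1 coprime_commute)
  qed
qed

definition hex_row :: "nat \<Rightarrow> nat \<Rightarrow> nat" where
  "hex_row r j = [[1, 3, 7, 11, 9, 5], [5, 7, 11, 3, 1, 9], [9, 11, 3, 7, 5, 1]] ! r ! (j - 1)"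

lemma bij_betw_hex_row:
  assumes "r < 3"
  shows "bij_betw (hex_row r) {1..6} {x. odd x \<and> x < 12}"
proof -
  have columns: "{1..6 :: nat} = {1, 2, 3, 4, 5, 6}"
    by auto
  have odds: "{x :: nat. odd x \<and> x < 12} = {1, 3, 5, 7, 9, 11}"
    by auto presburger
  have "r = 0 \<or> r = 1 \<or> r = 2"
    using assms by auto
  then show ?thesis
    unfolding bij_betw_def columns odds by (auto simp: hex_row_def inj_on_def)
qed

lemma hex_row_horizontal:
  assumes "r < 3" "j \<in> {1..<6}"
  shows "pow2_apart (hex_row r j) (hex_row r (Suc j))"
proof -
  have "r = 0 \<or> r = 1 \<or> r = 2" "j = 1 \<or> j = 2 \<or> j = 3 \<or> j = 4 \<or> j = 5"
    using assms by auto
  then show ?thesis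
    by (auto simp: hex_row_def pow2_apart_def intro: exI[of _ 1] exI[of _ 2] exI[of _ 3])
qed

lemma hex_row_closing:
  assumes "r < 3"
  shows "pow2_apart (hex_row r 6) (hex_row r 1)"
proof -
  have "r = 0 \<or> r = 1 \<or> r = 2"
    using assms by auto
  then show ?thesis
    by (auto simp: hex_row_def pow2_apart_def intro: exI[of _ 2] exI[of _ 3])
qed

lemma hex_row_vertical:
  assumes "r < 3" "j \<in> {1..6}"
  shows "pow2_apart (hex_row r j) (12 + hex_row (Suc r mod 3) j)"
proof -
  have "r = 0 \<or> r = 1 \<or> r = 2" "j = 1 \<or> j = 2 \<or> j = 3 \<or> j = 4 \<or> j = 5 \<or> j = 6"
    using assms by auto
  then show ?thesis
    by (auto simp: hex_row_def pow2_apart_def intro: exI[of _ 2] exI[of _ 4])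
qed

theorem theorem3p8:
  fixes n :: nat
  assumes "n \<ge> 1"
  shows "odd_prime_graph (prism_vertices 6 n) (prism_adj 6 n)"
proof (rule odd_prime_prism_if_layers_pow2_apart[where P = "\<lambda>i. hex_row ((i - 1) mod 3)"])
  show "bij_betw (hex_row ((i - 1) mod 3)) {1..6} {x. odd x \<and> x < 2 * 6}" for i
    using bij_betw_hex_row by simp
  show "pow2_apart (hex_row ((i - 1) mod 3) j) (hex_row ((i - 1) mod 3) (Suc j))"
    if "j \<in> {1..<6}" for i j
    using hex_row_horizontal that by simp
  show "pow2_apart (hex_row ((i - 1) mod 3) 6) (hex_row ((i - 1) mod 3) 1)" for i
    using hex_row_closing by simp
  show "pow2_apart (hex_row ((i - 1) mod 3) j) (2 * 6 + hex_row ((Suc i - 1) mod 3) j)"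
    if "i \<in> {1..<n}" "j \<in> {1..6}" for i j
  proof -
    have "(Suc i - 1) mod 3 = Suc ((i - 1) mod 3) mod 3"
      using that(1) by (cases i) (auto simp: mod_Suc_eq)
    then show ?thesis
      using hex_row_vertical[of "(i - 1) mod 3" j] that(2) by simp
  qed
qed

end
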